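(* For every $k\ge1$, every $\sigma\in S_k$ and every real $x>2k^2$, $$\sum_{\rho\in S_k\text{ a }k\text{-cycle}}x^{-|\sigma\rho^{-1}|}\le 2\,\frac{(k-1)!}{(k-|\mathsf{cyc}(\sigma)|+1)!}\,k^{|\mathsf{cyc}(\sigma)|}\,x^{-|\mathsf{cyc}(\sigma)|+1}.$$
   Context: $S_k$ is the symmetric group on $\{1,\dots,k\}$; $\mathsf{cyc}(\sigma)$ is the set of cycles of $\sigma$ (fixed points included). The Cayley weight $|\sigma|$ of $\sigma\in S_k$ is the minimum number of transpositions whose product is $\sigma$; equivalently $|\sigma|=k-|\mathsf{cyc}(\sigma)|$. *)

theory Defs
  imports "HOL-Analysis.Analysis" "HOL-Combinatorics.Combinatorics"
begin

definition Sym :: "nat \<Rightarrow> (nat \<Rightarrow> nat) set" where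
  "Sym k = {\<sigma>. \<sigma> permutes {1..k}}"

text \<open>Set of cycles of sigma on {1..k}, fixed points included (as singleton orbits).\<close>
definition cyc :: "nat \<Rightarrow> (nat \<Rightarrow> nat) \<Rightarrow> nat set set" where
  "cyc k \<sigma> = (\<lambda>i. orbit \<sigma> i) ` {1..k}"

definition cayley_weight :: "nat \<Rightarrow> (nat \<Rightarrow> nat) \<Rightarrow> nat" where
  "cayley_weight k \<sigma> = k - card (cyc k \<sigma>)"

definition full_cycles :: "nat \<Rightarrow> (nat \<Rightarrow> nat) set" where
  "full_cycles k = {\<rho> \<in> Sym k. card (cyc k \<rho>) = 1}"

end

theory Submission
  imports Defs
begin

text \<open>Let \<open>w \<tau>\<close> be the number of points minus the number of cycles of \<open>\<tau>\<close>, and let \<open>c\<close> be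
  the number of cycles of \<open>\<sigma>\<close>. Composing with a transposition merges two cycles or splits one, so
  \<open>w\<close> is subadditive and a permutation of weight \<open>j\<close> is a product of \<open>j\<close> transpositions: at most
  \<open>(k^2/2)^j\<close> permutations have weight \<open>j\<close>. For a \<open>k\<close>-cycle \<open>\<rho>\<close>, subadditivity gives
  \<open>w (\<sigma> \<circ> inv \<rho>) \<ge> c - 1\<close>. If \<open>2c \<ge> k + 2\<close>, each of the at most \<open>k!\<close> terms is at most
  \<open>x^(1 - c)\<close>. Otherwise, as \<open>\<rho> \<mapsto> \<sigma> \<circ> inv \<rho>\<close> is injective, the sum is at most the tail
  from \<open>c - 1\<close> on of the geometric series in \<open>k^2/(2x) < 1/4\<close>, i.e. at most
  \<open>4/3 (k^2/(2x))^(c - 1)\<close>. Elementary factorial estimates compare both bounds with the right-hand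
  side.\<close>

section \<open>Cycles and transpositions\<close>

text \<open>\<open>num_cycles {1..k} \<sigma> = card (cyc k \<sigma>)\<close>, so \<open>card S - num_cycles S \<tau>\<close> plays the role
  of the Cayley weight.\<close>

definition num_cycles :: "'a set \<Rightarrow> ('a \<Rightarrow> 'a) \<Rightarrow> nat" where
  "num_cycles S f = card (orbit f ` S)"

lemma num_cycles_id: "num_cycles (S :: 'a set) id = card S"
proof -
  have "orbit id = (\<lambda>i. {i} :: 'a set)" by (simp add: orbit_eq_singleton_iff fun_eq_iff)
  then show ?thesis unfolding num_cycles_def by (simp add: card_image)
qed

lemma num_cycles_le_card: "finite S \<Longrightarrow> num_cycles S f \<le> card S"
  unfolding num_cycles_def by (rule card_image_le)

lemma num_cycles_pos: "finite S \<Longrightarrow> S \<noteq> {} \<Longrightarrow> 0 < num_cycles S f"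
  unfolding num_cycles_def by (simp add: card_gt_0_iff)

lemma orbit_subset_if_closed:
  assumes "f a \<in> A" and "\<And>y. y \<in> A \<Longrightarrow> f y \<in> A"
  shows "orbit f a \<subseteq> A"
proof
  fix z assume "z \<in> orbit f a"
  then show "z \<in> A" by induct (use assms in auto)
qed

lemma orbit_subset_orbit_if_agree:
  assumes "a \<in> orbit f a" and "a \<in> orbit g a"
    and agree: "\<And>z. z \<in> orbit f a \<Longrightarrow> f z \<noteq> a \<Longrightarrow> g z = f z"
  shows "orbit f a \<subseteq> orbit g a"
proof
  fix y assume "y \<in> orbit f a"
  then show "y \<in> orbit g a"
  proof induct
    case base
    show ?case using assms orbit.base[of g a] by (cases "f a = a") auto
  next
    case (step y)
    show ?case using agree step orbit.step[OF step(2)] assms(2) by (cases "f y = a") auto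
  qed
qed

lemma permutation_orbit_eq:
  assumes "permutation f" and "y \<in> orbit f x"
  shows "orbit f y = orbit f x"
  using assms by (metis cyclic_on_orbit' orbit_cyclic_eq3)

lemma orbit_transpose_merge:
  assumes f: "permutation f" and nb: "b \<notin> orbit f a"
  shows "orbit (Transposition.transpose a b \<circ> f) a = orbit f a \<union> orbit f b"
proof -
  define g where "g = Transposition.transpose a b \<circ> f"
  have g: "permutation g" unfolding g_def using f by (simp add: permutation_compose permutation_swap_id)
  have self_f: "\<And>x. x \<in> orbit f x" and self_g: "\<And>x. x \<in> orbit g x"
    using f g by (simp_all add: permutation_self_in_orbit)
  have disj: "orbit f a \<inter> orbit f b = {}"
    using nb self_f f by (metis disjoint_iff permutation_orbit_eq)
  have a_sub: "orbit f a \<subseteq> orbit g a"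
  proof (rule orbit_subset_orbit_if_agree[OF self_f self_g])
    fix z assume "z \<in> orbit f a" "f z \<noteq> a"
    moreover have "f z \<noteq> b" using \<open>z \<in> orbit f a\<close> nb by (auto intro: orbit.step)
    ultimately show "g z = f z" unfolding g_def by simp
  qed
  have b_sub: "orbit f b \<subseteq> orbit g b"
  proof (rule orbit_subset_orbit_if_agree[OF self_f self_g])
    fix z assume "z \<in> orbit f b" "f z \<noteq> b"
    moreover have "f z \<noteq> a" using \<open>z \<in> orbit f b\<close> disj self_f by (auto intro: orbit.step)
    ultimately show "g z = f z" unfolding g_def by simp
  qed
  have "inv f a \<in> orbit f a"
    using f self_f by (metis bij_inv_eq_iff orbit.base permutation_bijective permutation_orbit_eq)
  then have "g (inv f a) \<in> orbit g a" using a_sub by (auto intro: orbit.step)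
  moreover have "g (inv f a) = b"
    unfolding g_def using f by (simp add: bij_is_surj permutation_bijective surj_f_inv_f)
  ultimately have "orbit g b = orbit g a" using g by (simp add: permutation_orbit_eq)
  moreover have "orbit g a \<subseteq> orbit f a \<union> orbit f b"
  proof (rule orbit_subset_if_closed)
    show closed: "g y \<in> orbit f a \<union> orbit f b" if "y \<in> orbit f a \<union> orbit f b" for y
    proof -
      have "f y \<in> orbit f a \<union> orbit f b" using that by (auto intro: orbit.step)
      then show ?thesis unfolding g_def using self_f
        by (metis Un_iff comp_apply transpose_apply_first transpose_apply_other transpose_apply_second)
    qed
    show "g a \<in> orbit f a \<union> orbit f b" using closed self_f by blast
  qed
  ultimately show ?thesis using a_sub b_sub unfolding g_def by blast
qed

lemma orbit_transpose_outside:
  assumes f: "permutation f" and x: "x \<notin> orbit f a \<union> orbit f b"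
  shows "orbit (Transposition.transpose a b \<circ> f) x = orbit f x"
proof (rule orbit_cong)
  show self: "x \<in> orbit f x" using f by (rule permutation_self_in_orbit)
  fix s assume "s \<in> orbit f x"
  then have "f s \<in> orbit f x" by (rule orbit.step)
  moreover have "a \<notin> orbit f x" "b \<notin> orbit f x"
    using x self permutation_orbit_eq[OF f, of a x] permutation_orbit_eq[OF f, of b x] by auto
  ultimately show "(Transposition.transpose a b \<circ> f) s = f s"
    by (metis comp_apply transpose_apply_other)
qed

lemma num_cycles_transpose_merge:
  assumes f: "f permutes S" and S: "finite S" "a \<in> S" "b \<in> S" and nb: "b \<notin> orbit f a"
  shows "num_cycles S f = Suc (num_cycles S (Transposition.transpose a b \<circ> f))"
proof -
  define g where "g = Transposition.transpose a b \<circ> f"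
  define U where "U = orbit f a \<union> orbit f b"
  have pf: "permutation f" using f S by (auto simp: permutation_permutes)
  have pg: "permutation g" unfolding g_def using pf by (simp add: permutation_compose permutation_swap_id)
  have self: "\<And>x. x \<in> orbit f x" using pf by (rule permutation_self_in_orbit)
  have gU: "orbit g a = U" unfolding g_def U_def using orbit_transpose_merge[OF pf nb] .
  define F0 where "F0 = orbit f ` (S - U)"
  have fin: "finite F0" unfolding F0_def using S by simp
  have notin: "Z \<notin> F0" if "Z \<subseteq> U" for Z
    using that self unfolding F0_def by auto
  have split_S: "S = (S - U) \<union> (S \<inter> U)" by blast
  have "orbit f ` (S \<inter> U) = {orbit f a, orbit f b}"
    using S self permutation_orbit_eq[OF pf] unfolding U_def by blast
  then have "orbit f ` S = insert (orbit f a) (insert (orbit f b) F0)"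
    unfolding F0_def by (subst split_S, subst image_Un) simp
  moreover have "orbit f a \<noteq> orbit f b" using nb self by metis
  ultimately have "card (orbit f ` S) = card F0 + 2"
    using fin notin[of "orbit f a"] notin[of "orbit f b"] unfolding U_def by simp
  moreover have "orbit g ` (S \<inter> U) = {U}"
    using S self gU permutation_orbit_eq[OF pg] unfolding U_def by blast
  moreover have "orbit g ` (S - U) = F0"
    using orbit_transpose_outside[OF pf] unfolding F0_def g_def U_def by (intro image_cong) auto
  ultimately have "card (orbit f ` S) = Suc (card (orbit g ` S))"
    using fin notin[of U] by (subst (2) split_S, subst image_Un) simp
  then show ?thesis unfolding num_cycles_def g_def .
qed

text \<open>If \<open>b = f^n a\<close> with \<open>n > 0\<close> minimal, then \<open>transpose a b \<circ> f\<close> closes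
  \<open>a, f a, \<dots>, f^(n-1) a\<close> into a cycle that misses \<open>b\<close>.\<close>

lemma transpose_splits_orbit:
  assumes ab: "a \<noteq> b" and b: "b \<in> orbit f a"
  shows "b \<notin> orbit (Transposition.transpose a b \<circ> f) a"
proof -
  define g where "g = Transposition.transpose a b \<circ> f"
  define n where "n = funpow_dist1 f a b"
  define A where "A = (\<lambda>m. (f ^^ m) a) ` {..<n}"
  have fn: "(f ^^ n) a = b" unfolding n_def using b by (rule funpow_dist1_prop)
  have not_b: "(f ^^ m) a \<noteq> b" if "m < n" for m
    using that ab funpow_dist1_least[of m f a b] unfolding n_def by (cases "m = 0") auto
  have not_a: "(f ^^ m) a \<noteq> a" if "0 < m" "m < n" for m
  proof
    assume "(f ^^ m) a = a"
    then have "(f ^^ (n - m)) a = (f ^^ n) a"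
      using that by (metis funpow_add le_add_diff_inverse2 less_imp_le comp_apply)
    then show False using not_b[of "n - m"] fn that by simp
  qed
  have "orbit g a \<subseteq> A"
  proof (rule orbit_subset_if_closed)
    show closed: "g y \<in> A" if "y \<in> A" for y
    proof -
      obtain m where m: "m < n" "y = (f ^^ m) a" using \<open>y \<in> A\<close> unfolding A_def by auto
      show ?thesis
      proof (cases "Suc m < n")
        case True
        then have "g y = (f ^^ Suc m) a"
          unfolding g_def using m not_a[of "Suc m"] not_b[of "Suc m"] by simp
        then show ?thesis unfolding A_def using True by blast
      next
        case False
        then have "Suc m = n" using m by simp
        then have "f y = b" using m fn by auto
        then have "g y = a" unfolding g_def by simp
        then show ?thesis unfolding A_def using m by (auto intro: image_eqI[of _ _ 0])
      qed
    qed
    have "a \<in> A" unfolding A_def n_def by (rule image_eqI[of _ _ 0]) auto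
    then show "g a \<in> A" by (rule closed)
  qed
  moreover have "b \<notin> A" unfolding A_def using not_b by auto
  ultimately show ?thesis unfolding g_def by blast
qed

lemma num_cycles_transpose_split:
  assumes f: "f permutes S" and S: "finite S" "a \<in> S" "b \<in> S"
    and ab: "a \<noteq> b" and b: "b \<in> orbit f a"
  shows "num_cycles S (Transposition.transpose a b \<circ> f) = Suc (num_cycles S f)"
proof -
  define g where "g = Transposition.transpose a b \<circ> f"
  have "g permutes S" unfolding g_def using f S by (simp add: permutes_compose permutes_swap_id)
  moreover have "b \<notin> orbit g a" unfolding g_def using ab b by (rule transpose_splits_orbit)
  moreover have "Transposition.transpose a b \<circ> g = f" unfolding g_def by (simp flip: comp_assoc)
  ultimately show ?thesis using num_cycles_transpose_merge[OF _ S] unfolding g_def by metis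
qed

lemma num_cycles_transpose_le:
  assumes "f permutes S" "finite S" "a \<in> S" "b \<in> S"
  shows "num_cycles S (Transposition.transpose a b \<circ> f) \<le> Suc (num_cycles S f)"
proof (cases "b \<in> orbit f a")
  case True
  then show ?thesis
    using num_cycles_transpose_split[OF assms] by (cases "a = b") simp_all
next
  case False
  then show ?thesis using num_cycles_transpose_merge[OF assms] by simp
qed

lemma transpose_adding_cycle:
  assumes f: "f permutes S" and "finite S" and "f \<noteq> id"
  obtains a b where "a \<in> S" "b \<in> S" "a \<noteq> b"
    "num_cycles S (Transposition.transpose a b \<circ> f) = Suc (num_cycles S f)"
proof -
  obtain a where a: "f a \<noteq> a" using \<open>f \<noteq> id\<close> by (metis eq_id_iff)
  then have "a \<in> S" using f by (meson permutes_not_in)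
  then have "f a \<in> S" using f by (simp add: permutes_in_image)
  with a \<open>a \<in> S\<close> show ?thesis using num_cycles_transpose_split[OF f \<open>finite S\<close>] orbit.base[of f a] that
    by metis
qed

lemma num_cycles_comp_single_cycle:
  assumes S: "finite S" and \<rho>: "\<rho> permutes S" "num_cycles S \<rho> = 1" and \<tau>: "\<tau> permutes S"
  shows "num_cycles S (\<tau> \<circ> \<rho>) + num_cycles S \<tau> \<le> card S + 1"
  using \<tau>
proof (induction "card S - num_cycles S \<tau>" arbitrary: \<tau> rule: less_induct)
  case less
  show ?case
  proof (cases "\<tau> = id")
    case True
    then show ?thesis using \<rho> by (simp add: num_cycles_id)
  next
    case False
    then obtain a b where ab: "a \<in> S" "b \<in> S"
      and more: "num_cycles S (Transposition.transpose a b \<circ> \<tau>) = Suc (num_cycles S \<tau>)"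
      using transpose_adding_cycle[OF less.prems S] by metis
    define \<tau>' where "\<tau>' = Transposition.transpose a b \<circ> \<tau>"
    have \<tau>': "\<tau>' permutes S"
      unfolding \<tau>'_def using less.prems ab by (simp add: permutes_compose permutes_swap_id)
    have "num_cycles S (\<tau>' \<circ> \<rho>) + num_cycles S \<tau>' \<le> card S + 1"
      using less.hyps[OF _ \<tau>'] more num_cycles_le_card[OF S, of \<tau>'] unfolding \<tau>'_def by simp
    moreover have "\<tau> \<circ> \<rho> = Transposition.transpose a b \<circ> (\<tau>' \<circ> \<rho>)"
      unfolding \<tau>'_def by (simp flip: comp_assoc)
    moreover have "num_cycles S (Transposition.transpose a b \<circ> (\<tau>' \<circ> \<rho>)) \<le> Suc (num_cycles S (\<tau>' \<circ> \<rho>))"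
      using num_cycles_transpose_le[OF permutes_compose[OF \<rho>(1) \<tau>'] S ab] .
    ultimately show ?thesis using more unfolding \<tau>'_def by simp
  qed
qed

lemma num_cycles_comp_inv_single_cycle:
  assumes S: "finite S" and \<sigma>: "\<sigma> permutes S" and \<rho>: "\<rho> permutes S" "num_cycles S \<rho> = 1"
  shows "num_cycles S \<sigma> - 1 \<le> card S - num_cycles S (\<sigma> \<circ> inv \<rho>)"
proof -
  have "(\<sigma> \<circ> inv \<rho>) \<circ> \<rho> = \<sigma>" using permutes_inv_o(2)[OF \<rho>(1)] by (simp add: comp_assoc)
  moreover have "\<sigma> \<circ> inv \<rho> permutes S" using \<sigma> \<rho>(1) by (simp add: permutes_compose permutes_inv)
  ultimately show ?thesis using num_cycles_comp_single_cycle[OF S \<rho>] by fastforce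
qed

section \<open>Counting permutations by number of cycles\<close>

definition transpositions :: "'a::linorder set \<Rightarrow> ('a \<Rightarrow> 'a) set" where
  "transpositions S = (\<lambda>(a, b). Transposition.transpose a b) ` {(a, b) \<in> S \<times> S. a < b}"

lemma transpose_in_transpositions:
  assumes "a \<in> S" "b \<in> S" "a \<noteq> b"
  shows "Transposition.transpose a b \<in> transpositions S"
proof (cases "a < b")
  case True
  then show ?thesis unfolding transpositions_def using assms by force
next
  case False
  then have "b < a" using assms by simp
  then show ?thesis unfolding transpositions_def using assms
    by (auto simp: transpose_commute[of a b] intro!: image_eqI[where x="(b, a)"])
qed

lemma finite_transpositions:
  assumes "finite S"
  shows "finite (transpositions S)"
proof -
  have "{(a, b) \<in> S \<times> S. a < b} \<subseteq> S \<times> S" by blast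
  then show ?thesis
    unfolding transpositions_def using assms by (meson finite_SigmaI finite_imageI finite_subset)
qed

lemma card_transpositions:
  assumes "finite S"
  shows "2 * card (transpositions S) \<le> card S ^ 2"
proof -
  define P where "P = {(a, b) \<in> S \<times> S. a < b}"
  have "P \<union> prod.swap ` P \<subseteq> S \<times> S" "P \<inter> prod.swap ` P = {}" unfolding P_def by auto
  moreover have "finite P" unfolding P_def using assms by (auto intro: finite_subset[of _ "S \<times> S"])
  ultimately have "card P + card (prod.swap ` P) \<le> card (S \<times> S)"
    using assms by (metis card_Un_disjoint card_mono finite_SigmaI finite_imageI)
  moreover have "card (prod.swap ` P) = card P" by (simp add: card_image)
  moreover have "card (transpositions S) \<le> card P"
    unfolding transpositions_def P_def using \<open>finite P\<close> P_def by (intro card_image_le) simp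
  ultimately show ?thesis by (simp add: card_cartesian_product power2_eq_square)
qed

lemma permutes_as_transposition_product:
  fixes S :: "'a::linorder set"
  assumes S: "finite S" and \<tau>: "\<tau> permutes S"
  shows "\<exists>ts. set ts \<subseteq> transpositions S \<and> length ts = card S - num_cycles S \<tau>
           \<and> \<tau> = foldr (\<circ>) ts id"
  using \<tau>
proof (induction "card S - num_cycles S \<tau>" arbitrary: \<tau> rule: less_induct)
  case less
  show ?case
  proof (cases "\<tau> = id")
    case True
    then show ?thesis by (intro exI[of _ "[]"]) (simp add: num_cycles_id)
  next
    case False
    then obtain a b where ab: "a \<in> S" "b \<in> S" "a \<noteq> b"
      and more: "num_cycles S (Transposition.transpose a b \<circ> \<tau>) = Suc (num_cycles S \<tau>)"
      using transpose_adding_cycle[OF less.prems S] by metis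
    define \<tau>' where "\<tau>' = Transposition.transpose a b \<circ> \<tau>"
    have \<tau>': "\<tau>' permutes S"
      unfolding \<tau>'_def using less.prems ab by (simp add: permutes_compose permutes_swap_id)
    have le: "num_cycles S \<tau>' \<le> card S" by (rule num_cycles_le_card[OF S])
    then obtain ts where ts: "set ts \<subseteq> transpositions S"
      "length ts = card S - num_cycles S \<tau>'" "\<tau>' = foldr (\<circ>) ts id"
      using less.hyps[OF _ \<tau>'] more unfolding \<tau>'_def by fastforce
    have "\<tau> = Transposition.transpose a b \<circ> \<tau>'" unfolding \<tau>'_def by (simp flip: comp_assoc)
    then show ?thesis
      using ts le more transpose_in_transpositions[OF ab] unfolding \<tau>'_def
      by (intro exI[of _ "Transposition.transpose a b # ts"]) auto
  qed
qed

lemma card_permutations_num_cycles_le: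
  fixes S :: "'a::linorder set"
  assumes S: "finite S"
  shows "card {\<tau>. \<tau> permutes S \<and> card S - num_cycles S \<tau> = j} \<le> card (transpositions S) ^ j"
proof -
  have fin: "finite (transpositions S)" using S by (rule finite_transpositions)
  let ?L = "{ts. set ts \<subseteq> transpositions S \<and> length ts = j}"
  have finL: "finite ?L" using fin by (rule finite_lists_length_eq)
  have "{\<tau>. \<tau> permutes S \<and> card S - num_cycles S \<tau> = j} \<subseteq> (\<lambda>ts. foldr (\<circ>) ts id) ` ?L"
    using permutes_as_transposition_product[OF S] by blast
  then have "card {\<tau>. \<tau> permutes S \<and> card S - num_cycles S \<tau> = j}
      \<le> card ((\<lambda>ts. foldr (\<circ>) ts id) ` ?L)"
    using finL by (intro card_mono finite_imageI)
  also have "\<dots> \<le> card ?L" using finL by (rule card_image_le)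
  finally have "card {\<tau>. \<tau> permutes S \<and> card S - num_cycles S \<tau> = j} \<le> card ?L" .
  then show ?thesis by (simp add: card_lists_length_eq[OF fin])
qed

lemma sum_permutations_power_weight_le:
  fixes S :: "'a::linorder set" and y :: real
  assumes S: "finite S" and y: "0 \<le> y"
  shows "(\<Sum>\<tau>\<in>{\<tau>. \<tau> permutes S \<and> m \<le> card S - num_cycles S \<tau>}. y ^ (card S - num_cycles S \<tau>))
    \<le> (\<Sum>j = m..card S. (real (card S) ^ 2 / 2 * y) ^ j)"
proof -
  let ?w = "\<lambda>\<tau>. card S - num_cycles S \<tau>"
  let ?B = "{\<tau>. \<tau> permutes S \<and> m \<le> ?w \<tau>}"
  have finB: "finite ?B" using finite_permutations[OF S] by simp
  have "(\<Sum>\<tau>\<in>?B. y ^ ?w \<tau>) = (\<Sum>j = m..card S. \<Sum>\<tau>\<in>{\<tau> \<in> ?B. ?w \<tau> = j}. y ^ ?w \<tau>)"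
    by (rule sum.group[symmetric, OF finB]) auto
  also have "\<dots> \<le> (\<Sum>j = m..card S. (real (card S) ^ 2 / 2 * y) ^ j)"
  proof (rule sum_mono)
    fix j
    have "card {\<tau> \<in> ?B. ?w \<tau> = j} \<le> card {\<tau>. \<tau> permutes S \<and> ?w \<tau> = j}"
      by (rule card_mono) (use finite_permutations[OF S] in auto)
    also have "\<dots> \<le> card (transpositions S) ^ j" by (rule card_permutations_num_cycles_le[OF S])
    finally have "real (card {\<tau> \<in> ?B. ?w \<tau> = j}) \<le> real (card (transpositions S)) ^ j"
      by (simp only: of_nat_power[symmetric] of_nat_le_iff)
    also have "\<dots> \<le> (real (card S) ^ 2 / 2) ^ j"
      using card_transpositions[OF S] by (intro power_mono) (auto simp flip: of_nat_power)
    finally have "real (card {\<tau> \<in> ?B. ?w \<tau> = j}) * y ^ j \<le> (real (card S) ^ 2 / 2) ^ j * y ^ j"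
      using y by (intro mult_right_mono) auto
    moreover have "(\<Sum>\<tau>\<in>{\<tau> \<in> ?B. ?w \<tau> = j}. y ^ ?w \<tau>) = real (card {\<tau> \<in> ?B. ?w \<tau> = j}) * y ^ j"
      by simp
    ultimately show "(\<Sum>\<tau>\<in>{\<tau> \<in> ?B. ?w \<tau> = j}. y ^ ?w \<tau>) \<le> (real (card S) ^ 2 / 2 * y) ^ j"
      by (simp only: power_mult_distrib)
  qed
  finally show ?thesis .
qed

section \<open>Factorial and geometric estimates\<close>

lemma fact_le_fact_ratio_mult_power:
  assumes "1 \<le> k" "c \<le> k" "k + 2 \<le> 2 * c"
  shows "fact k \<le> fact (k - 1) / fact (k - c + 1) * real k ^ c"
proof -
  have "fact (k - c + 1) \<le> (of_nat ((k - c + 1) ^ (k - c + 1)) :: real)" by (rule fact_le_power)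
  also have "\<dots> = real (k - c + 1) ^ (k - c + 1)" by (rule of_nat_power)
  also have "\<dots> \<le> real k ^ (k - c + 1)" by (rule power_mono) (use assms in auto)
  also have "\<dots> \<le> real k ^ (c - 1)" by (rule power_increasing) (use assms in auto)
  finally have le: "fact (k - c + 1) \<le> real k ^ (c - 1)" .
  have "fact k * fact (k - c + 1) = fact (k - 1) * (real k * fact (k - c + 1))"
    using assms(1) by (simp add: fact_reduce[of k] del: fact_Suc)
  also have "\<dots> \<le> fact (k - 1) * (real k * real k ^ (c - 1))"
    using le by (intro mult_left_mono) auto
  also have "\<dots> = fact (k - 1) * real k ^ c" using assms by (simp flip: power_Suc)
  finally have "fact k * fact (k - c + 1) \<le> fact (k - 1) * real k ^ c" .
  then show ?thesis by (simp only: times_divide_eq_left pos_le_divide_eq[OF fact_gt_zero])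
qed

lemma half_power_mult_fact_le_fact:
  "1 \<le> c \<Longrightarrow> 2 * c \<le> k + 1 \<Longrightarrow> (real k / 2) ^ (c - 1) * fact (k - c + 1) \<le> fact k"
proof (induction c)
  case (Suc c)
  show ?case
  proof (cases "c = 0")
    case False
    have "(real k / 2) ^ (Suc c - 1) * fact (k - Suc c + 1)
        = (real k / 2) * ((real k / 2) ^ (c - 1) * fact (k - c))"
      using False Suc.prems by (simp add: Suc_diff_Suc power_eq_if)
    also have "\<dots> \<le> real (k - c + 1) * ((real k / 2) ^ (c - 1) * fact (k - c))"
      using Suc.prems by (intro mult_right_mono) auto
    also have "\<dots> = (real k / 2) ^ (c - 1) * fact (k - c + 1)" by (simp add: fact_Suc)
    also have "\<dots> \<le> fact k" using Suc False by simp
    finally show ?thesis .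
  next
    case True
    then have "k - Suc c + 1 = k" using Suc.prems by simp
    then show ?thesis using True by simp
  qed
qed simp

lemma power_le_fact_ratio_mult_power:
  assumes "1 \<le> c" "2 * c \<le> k + 1"
  shows "(real k ^ 2 / 2) ^ (c - 1) \<le> fact (k - 1) / fact (k - c + 1) * real k ^ c"
proof -
  have "(real k ^ 2 / 2) ^ (c - 1) * fact (k - c + 1)
      = real k ^ (c - 1) * ((real k / 2) ^ (c - 1) * fact (k - c + 1))"
    by (simp only: power2_eq_square times_divide_eq_right[symmetric] power_mult_distrib mult.assoc)
  also have "\<dots> \<le> real k ^ (c - 1) * fact k"
    using half_power_mult_fact_le_fact[OF assms] by (intro mult_left_mono) auto
  also have "\<dots> = fact (k - 1) * real k ^ c"
    using assms by (cases k) (simp_all add: power_eq_if)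
  finally show ?thesis by (simp only: times_divide_eq_left pos_le_divide_eq[OF fact_gt_zero])
qed

lemma sum_power_le_four_thirds:
  fixes r :: real
  assumes "0 \<le> r" "r < 1 / 4"
  shows "(\<Sum>j = m..n. r ^ j) \<le> 4 / 3 * r ^ m"
proof -
  have "(\<Sum>j = m..n. r ^ j) \<le> r ^ m / (1 - r)"
    using assms by (auto simp: sum_gp intro: divide_right_mono)
  also have "\<dots> \<le> 4 / 3 * r ^ m"
  proof -
    have "r * r ^ m \<le> 1 / 4 * r ^ m" using assms by (intro mult_right_mono) auto
    then show ?thesis using assms by (simp add: field_simps)
  qed
  finally show ?thesis .
qed

section \<open>Sums over full cycles\<close>

definition single_cycles :: "'a set \<Rightarrow> ('a \<Rightarrow> 'a) set" where
  "single_cycles S = {\<rho>. \<rho> permutes S \<and> num_cycles S \<rho> = 1}"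

lemma sum_single_cycles_le_fact:
  fixes y :: real
  assumes S: "finite S" and \<sigma>: "\<sigma> permutes S" and y: "0 \<le> y" "y \<le> 1"
  shows "(\<Sum>\<rho>\<in>single_cycles S. y ^ (card S - num_cycles S (\<sigma> \<circ> inv \<rho>)))
    \<le> fact (card S) * y ^ (num_cycles S \<sigma> - 1)"
proof -
  have "(\<Sum>\<rho>\<in>single_cycles S. y ^ (card S - num_cycles S (\<sigma> \<circ> inv \<rho>)))
      \<le> real (card (single_cycles S)) * y ^ (num_cycles S \<sigma> - 1)"
    using num_cycles_comp_inv_single_cycle[OF S \<sigma>] y
    by (intro sum_bounded_above power_decreasing) (auto simp: single_cycles_def)
  also have "\<dots> \<le> fact (card S) * y ^ (num_cycles S \<sigma> - 1)"
  proof (rule mult_right_mono)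
    have "card (single_cycles S) \<le> card {\<rho>. \<rho> permutes S}"
      unfolding single_cycles_def using finite_permutations[OF S] by (intro card_mono) auto
    then show "real (card (single_cycles S)) \<le> fact (card S)"
      using card_permutations[OF refl S] by (metis of_nat_fact of_nat_le_iff)
  qed (use y in simp)
  finally show ?thesis .
qed

lemma sum_single_cycles_le_geometric:
  fixes S :: "'a::linorder set" and y :: real
  assumes S: "finite S" and \<sigma>: "\<sigma> permutes S" and y: "0 \<le> y" "2 * real (card S) ^ 2 * y < 1"
  shows "(\<Sum>\<rho>\<in>single_cycles S. y ^ (card S - num_cycles S (\<sigma> \<circ> inv \<rho>)))
    \<le> 4 / 3 * (real (card S) ^ 2 / 2 * y) ^ (num_cycles S \<sigma> - 1)"
proof -
  let ?w = "\<lambda>\<tau>. card S - num_cycles S \<tau>" and ?m = "num_cycles S \<sigma> - 1"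
  let ?B = "{\<tau>. \<tau> permutes S \<and> ?m \<le> ?w \<tau>}"
  have "inj_on (\<lambda>\<rho>. \<sigma> \<circ> inv \<rho>) (single_cycles S)"
  proof (rule inj_onI)
    fix \<rho>1 \<rho>2
    assume \<rho>: "\<rho>1 \<in> single_cycles S" "\<rho>2 \<in> single_cycles S" "\<sigma> \<circ> inv \<rho>1 = \<sigma> \<circ> inv \<rho>2"
    then have "inv \<rho>1 = inv \<rho>2" using permutes_inj[OF \<sigma>] by (simp add: fun_eq_iff inj_eq)
    then show "\<rho>1 = \<rho>2" using \<rho> unfolding single_cycles_def by (metis mem_Collect_eq permutes_inv_inv)
  qed
  then have "(\<Sum>\<rho>\<in>single_cycles S. y ^ ?w (\<sigma> \<circ> inv \<rho>))
      = (\<Sum>\<tau>\<in>(\<lambda>\<rho>. \<sigma> \<circ> inv \<rho>) ` single_cycles S. y ^ ?w \<tau>)"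
    by (simp add: sum.reindex)
  also have "\<dots> \<le> (\<Sum>\<tau>\<in>?B. y ^ ?w \<tau>)"
  proof (rule sum_mono2)
    show "finite ?B" using finite_permutations[OF S] by simp
    show "(\<lambda>\<rho>. \<sigma> \<circ> inv \<rho>) ` single_cycles S \<subseteq> ?B"
      using num_cycles_comp_inv_single_cycle[OF S \<sigma>] \<sigma>
      by (auto simp: single_cycles_def permutes_compose permutes_inv)
  qed (use y in simp)
  also have "\<dots> \<le> (\<Sum>j = ?m..card S. (real (card S) ^ 2 / 2 * y) ^ j)"
    by (rule sum_permutations_power_weight_le[OF S y(1)])
  also have "\<dots> \<le> 4 / 3 * (real (card S) ^ 2 / 2 * y) ^ ?m"
    using y by (intro sum_power_le_four_thirds) (auto simp: mult_ac)
  finally show ?thesis .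
qed

lemma sum_single_cycles_bound:
  fixes S :: "'a::linorder set" and y :: real
  assumes S: "finite S" "S \<noteq> {}" and \<sigma>: "\<sigma> permutes S"
    and y: "0 \<le> y" "2 * real (card S) ^ 2 * y < 1"
  shows "(\<Sum>\<rho>\<in>single_cycles S. y ^ (card S - num_cycles S (\<sigma> \<circ> inv \<rho>)))
    \<le> 2 * (fact (card S - 1) / fact (card S - num_cycles S \<sigma> + 1)) * real (card S) ^ num_cycles S \<sigma>
        * y ^ (num_cycles S \<sigma> - 1)"
proof -
  define k c where "k = card S" and "c = num_cycles S \<sigma>"
  define Q where "Q = fact (k - 1) / fact (k - c + 1) * real k ^ c"
  let ?sum = "\<Sum>\<rho>\<in>single_cycles S. y ^ (card S - num_cycles S (\<sigma> \<circ> inv \<rho>))"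
  have k: "1 \<le> k" using S unfolding k_def by (simp add: Suc_le_eq card_gt_0_iff)
  have c: "1 \<le> c" "c \<le> k"
    using num_cycles_pos[OF S] num_cycles_le_card[OF S(1)] unfolding c_def k_def by (auto simp: Suc_le_eq)
  have "1 * y \<le> real k ^ 2 * y" using k y(1) by (intro mult_right_mono) (auto simp: one_le_power)
  then have "y \<le> 1" using y(2) unfolding k_def by linarith
  have Q: "0 \<le> Q * y ^ (c - 1)" unfolding Q_def using y(1) by simp
  consider "k + 2 \<le> 2 * c" | "2 * c \<le> k + 1" by linarith
  then have "?sum \<le> 2 * Q * y ^ (c - 1)"
  proof cases
    case 1
    have "?sum \<le> fact k * y ^ (c - 1)"
      using sum_single_cycles_le_fact[OF S(1) \<sigma> y(1) \<open>y \<le> 1\<close>] unfolding k_def c_def .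
    also have "\<dots> \<le> Q * y ^ (c - 1)"
      unfolding Q_def using fact_le_fact_ratio_mult_power[OF k c(2) 1] y(1) by (intro mult_right_mono) auto
    finally show ?thesis using Q by linarith
  next
    case 2
    have "?sum \<le> 4 / 3 * (real k ^ 2 / 2 * y) ^ (c - 1)"
      using sum_single_cycles_le_geometric[OF S(1) \<sigma> y] unfolding k_def c_def .
    also have "\<dots> = 4 / 3 * ((real k ^ 2 / 2) ^ (c - 1) * y ^ (c - 1))" by (simp only: power_mult_distrib)
    also have "\<dots> \<le> 4 / 3 * (Q * y ^ (c - 1))"
      unfolding Q_def using power_le_fact_ratio_mult_power[OF c(1) 2] y(1)
      by (intro mult_left_mono mult_right_mono) auto
    finally show ?thesis using Q by linarith
  qed
  then show ?thesis unfolding Q_def k_def c_def by (simp add: mult_ac)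
qed

theorem lemma5p11:
  fixes k :: nat and \<sigma> :: "nat \<Rightarrow> nat" and x :: real
  assumes "k \<ge> 1" and "\<sigma> \<in> Sym k" and "x > 2 * real k ^ 2"
  shows "(\<Sum>\<rho>\<in>full_cycles k. x powi (- int (cayley_weight k (\<sigma> \<circ> inv \<rho>))))
     \<le> 2 * (fact (k - 1) / fact (k - card (cyc k \<sigma>) + 1))
         * real k ^ card (cyc k \<sigma>) * x powi (1 - int (card (cyc k \<sigma>)))"
proof -
  have S: "finite {1..k}" "{1..k} \<noteq> {}" using assms(1) by auto
  have \<sigma>: "\<sigma> permutes {1..k}" using assms(2) by (simp add: Sym_def)
  have cyc: "card (cyc k f) = num_cycles {1..k} f" for f by (simp add: cyc_def num_cycles_def)
  have "0 < x" using assms(3) by (rule le_less_trans[rotated]) simp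
  then have y: "0 \<le> inverse x" "2 * real (card {1..k}) ^ 2 * inverse x < 1"
    using assms(3) by (simp_all add: field_simps)
  have powi: "x powi (- int n) = inverse x ^ n" for n by (simp add: power_int_minus power_inverse)
  have exponent: "1 - int (num_cycles {1..k} \<sigma>) = - int (num_cycles {1..k} \<sigma> - 1)"
    using num_cycles_pos[OF S, of \<sigma>] by (simp add: of_nat_diff Suc_le_eq)
  have "full_cycles k = single_cycles {1..k}"
    by (simp add: full_cycles_def single_cycles_def Sym_def cyc)
  moreover have "cayley_weight k f = card {1..k} - num_cycles {1..k} f" for f
    by (simp add: cayley_weight_def cyc)
  ultimately show ?thesis
    using sum_single_cycles_bound[OF S \<sigma> y] unfolding cyc exponent powi by simp
qed

end
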